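(* Let $\Omega\subseteq\mathbf{W}^{\mathbb{R}}_D$ be a weighted clone. Then $\mathrm{supp}(\Omega)=\mathrm{Pol}(\mathrm{Imp}_{\mathbb{R}}(\Omega))$.
   Context: $D$ is a fixed finite set with $|D|\ge2$; $\overline{\mathbb{R}}=\mathbb{R}\cup\{\infty\}$. An $m$-ary weighted relation is $\gamma:D^m\to\overline{\mathbb{R}}$; $\mathbf{\Phi}^{\mathbb{R}}_D$ is the set of all of them; $\mathrm{Feas}(\gamma)=\{\mathbf{x}:\gamma(\mathbf{x})<\infty\}$. A $k$-ary operation is $f:D^k\to D$, applied to tuples coordinatewise; $\mathbf{O}^{(k)}_D$ is the set of $k$-ary operations. $f$ is a polymorphism of $\gamma$ if $f(\mathbf{x}_1,\dots,\mathbf{x}_k)\in\mathrm{Feas}(\gamma)$ whenever all $\mathbf{x}_i\in\mathrm{Feas}(\gamma)$; $\mathrm{Pol}(\Gamma)$ is the set of operations that are polymorphisms of every $\gamma\in\Gamma$. Projections: $e^{(k)}_i(x_1,\dots,x_k)=x_i$; $\mathbf{J}_D$ all projections, $\mathbf{J}_D^{(k)}$ the $k$-ary ones. Superposition: $f[g_1,\dots,g_k](\mathbf{x})=f(g_1(\mathbf{x}),\dots,g_k(\mathbf{x}))$. A $k$-ary weighting is $\omega:\mathbf{O}^{(k)}_D\to\mathbb{R}$ with $\sum_f\omega(f)=0$ and $\omega(f)<0$ only if $f$ is a projection; $\mathbf{W}^{\mathbb{R}}_D$ is the set of all weightings. $\mathrm{supp}(\omega)=\mathbf{J}_D^{(k)}\cup\{f:\omega(f)>0\}$;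 $\mathrm{supp}(\Omega)=\mathbf{J}_D\cup\bigcup_{\omega\in\Omega}\mathrm{supp}(\omega)$. Superposition of a weighting: $\omega[g_1,\dots,g_k](f')=\sum_{f:f[g_1,\dots,g_k]=f'}\omega(f)$, proper if it is a weighting. Topology: $k$-ary weightings lie in $\mathbb{R}^{\mathbf{O}^{(k)}_D}$ with disjoint union topology over $k$. A weighted clone is a non-empty set $\Omega$ of weightings closed under scaling by non-negative reals, addition of weightings of equal arity, and proper superposition with operations from $\mathrm{supp}(\Omega)$, and topologically closed. A $k$-ary weighting $\omega$ improves $\gamma$ if $\mathrm{supp}(\omega)\subseteq\mathrm{Pol}(\gamma)$ and for all $\mathbf{x}_1,\dots,\mathbf{x}_k\in\mathrm{Feas}(\gamma)$, $\sum_{f\in\mathrm{supp}(\omega)}\omega(f)\gamma(f(\mathbf{x}_1,\dots,\mathbf{x}_k))\le0$. $\mathrm{Imp}_{\mathbb{R}}(\Omega)$ is the set of weighted relations in $\mathbf{\Phi}^{\mathbb{R}}_D$ improved by every $\omega\in\Omega$. *)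

theory Defs
  imports "HOL-Analysis.Analysis"
begin

text \<open>The domain D is the universe of a finite type 'd.
A k-ary operation is represented canonically as a function on lists which is
'undefined' off lists of length k; operations are paired with their arity.
An m-ary weighted relation is a pair (m, gamma) with gamma on lists of
length m taking values in the extended reals other than minus infinity
(values off length-m lists are irrelevant).  A k-ary weighting is a pair
(k, omega) with omega a real function on operations, vanishing outside the
k-ary operations.\<close>

type_synonym 'd op = "nat \<times> ('d list \<Rightarrow> 'd)"
type_synonym 'd wrel = "nat \<times> ('d list \<Rightarrow> ereal)"
type_synonym 'd wgt = "nat \<times> (('d list \<Rightarrow> 'd) \<Rightarrow> real)"

definition ops :: "nat \<Rightarrow> ('d list \<Rightarrow> 'd) set" where
  "ops k = {f. \<forall>xs. length xs \<noteq> k \<longrightarrow> f xs = undefined}"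

definition proj :: "nat \<Rightarrow> nat \<Rightarrow> ('d list \<Rightarrow> 'd)" where
  "proj k i = (\<lambda>xs. if length xs = k then xs ! i else undefined)"

definition projs :: "nat \<Rightarrow> ('d list \<Rightarrow> 'd) set" where
  "projs k = {proj k i | i. i < k}"

definition all_projs :: "'d op set" where
  "all_projs = {(k, f). 1 \<le> k \<and> f \<in> projs k}"

definition apply_op :: "('d list \<Rightarrow> 'd) \<Rightarrow> nat \<Rightarrow> 'd list list \<Rightarrow> 'd list" where
  "apply_op f m xs = map (\<lambda>i. f (map (\<lambda>x. x ! i) xs)) [0..<m]"

definition is_wrel :: "'d wrel \<Rightarrow> bool" where
  "is_wrel g \<longleftrightarrow> (\<forall>x. length x = fst g \<longrightarrow> snd g x \<noteq> -\<infinity>)"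

definition Feas :: "'d wrel \<Rightarrow> 'd list set" where
  "Feas g = {x. length x = fst g \<and> snd g x < \<infinity>}"

definition is_polymorphism :: "'d op \<Rightarrow> 'd wrel \<Rightarrow> bool" where
  "is_polymorphism F g \<longleftrightarrow>
     (\<forall>xs. length xs = fst F \<and> set xs \<subseteq> Feas g \<longrightarrow> apply_op (snd F) (fst g) xs \<in> Feas g)"

definition Pol :: "'d wrel set \<Rightarrow> 'd op set" where
  "Pol \<Gamma> = {(k, f). 1 \<le> k \<and> f \<in> ops k \<and> (\<forall>g\<in>\<Gamma>. is_polymorphism (k, f) g)}"

definition superpos :: "('d list \<Rightarrow> 'd) \<Rightarrow> nat \<Rightarrow> ('d list \<Rightarrow> 'd) list \<Rightarrow> ('d list \<Rightarrow> 'd)" where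
  "superpos f l gs = (\<lambda>xs. if length xs = l then f (map (\<lambda>g. g xs) gs) else undefined)"

definition is_weighting :: "'d wgt \<Rightarrow> bool" where
  "is_weighting W \<longleftrightarrow> (let k = fst W; w = snd W in
     1 \<le> k \<and> (\<forall>f. f \<notin> ops k \<longrightarrow> w f = 0) \<and> sum w (ops k) = 0 \<and>
     (\<forall>f. w f < 0 \<longrightarrow> f \<in> projs k))"

definition supp :: "'d wgt \<Rightarrow> 'd op set" where
  "supp W = {(fst W, f) | f. f \<in> projs (fst W)} \<union>
            {(fst W, f) | f. f \<in> ops (fst W) \<and> snd W f > 0}"

definition supp_set :: "'d wgt set \<Rightarrow> 'd op set" where
  "supp_set \<Omega> = all_projs \<union> (\<Union>W\<in>\<Omega>. supp W)"

definition wsuperpos :: "'d wgt \<Rightarrow> nat \<Rightarrow> ('d list \<Rightarrow> 'd) list \<Rightarrow> 'd wgt" where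
  "wsuperpos W l gs = (l, \<lambda>f'. \<Sum>f\<in>{f \<in> ops (fst W). superpos f l gs = f'}. snd W f)"

definition weighted_clone :: "'d wgt set \<Rightarrow> bool" where
  "weighted_clone \<Omega> \<longleftrightarrow>
     \<Omega> \<noteq> {} \<and> (\<forall>W\<in>\<Omega>. is_weighting W) \<and>
     (\<forall>W\<in>\<Omega>. \<forall>c::real. c \<ge> 0 \<longrightarrow> (fst W, \<lambda>f. c * snd W f) \<in> \<Omega>) \<and>
     (\<forall>W1\<in>\<Omega>. \<forall>W2\<in>\<Omega>. fst W1 = fst W2 \<longrightarrow> (fst W1, \<lambda>f. snd W1 f + snd W2 f) \<in> \<Omega>) \<and>
     (\<forall>W\<in>\<Omega>. \<forall>l gs. length gs = fst W \<and> (\<forall>g\<in>set gs. (l, g) \<in> supp_set \<Omega>) \<and>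
         is_weighting (wsuperpos W l gs) \<longrightarrow> wsuperpos W l gs \<in> \<Omega>) \<and>
     (\<forall>k. closed {w. (k, w) \<in> \<Omega>})"

definition improves :: "'d wgt \<Rightarrow> 'd wrel \<Rightarrow> bool" where
  "improves W g \<longleftrightarrow> supp W \<subseteq> Pol {g} \<and>
     (\<forall>xs. length xs = fst W \<and> set xs \<subseteq> Feas g \<longrightarrow>
        (\<Sum>f\<in>{f. (fst W, f) \<in> supp W}. snd W f * real_of_ereal (snd g (apply_op f (fst g) xs))) \<le> 0)"

definition Imp :: "'d wgt set \<Rightarrow> 'd wrel set" where
  "Imp \<Omega> = {g. is_wrel g \<and> (\<forall>W\<in>\<Omega>. improves W g)}"

end

theory Submission
  imports Defs
begin

text \<open>The inclusion of the support in the polymorphisms of \<open>Imp \<Omega>\<close> is immediate from the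
  definition of improvement.  Conversely, the support of a weighted clone is closed under
  superposition: if \<open>g\<close> has positive weight in \<open>W \<in> \<Omega>\<close> and \<open>h\<^sub>1, ..., h\<^sub>l\<close> lie in the
  support, then \<open>W[h\<^sub>1, ..., h\<^sub>l]\<close> can fail to be a weighting only through negative weight on
  those \<open>h\<^sub>i\<close> that are not projections; adding \<open>c \<cdot> M\<close> for some \<open>M \<in> \<Omega>\<close> positive on these
  \<open>h\<^sub>i\<close> and \<open>c\<close> large enough yields a member of \<open>\<Omega>\<close> giving \<open>g[h\<^sub>1, ..., h\<^sub>l]\<close> positive
  weight.  Hence the crisp relation whose tuples are the value tables, on all \<open>k\<close>-tuples, of the
  \<open>k\<close>-ary operations of the support is improved by \<open>\<Omega>\<close>; a \<open>k\<close>-ary polymorphism of it maps the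
  tables of the projections to its own table, which is therefore the table of an operation
  of the support.\<close>

lemma proj_in_projs: "i < n \<Longrightarrow> proj n i \<in> projs n"
  unfolding projs_def by auto

lemma projs_subset_ops: "projs k \<subseteq> ops k"
  unfolding projs_def proj_def ops_def by auto

lemma ops_eq_PiE: "ops k = PiE {xs. length xs = k} (\<lambda>_. UNIV)"
  unfolding ops_def PiE_def extensional_def by auto

lemma finite_ops: "finite (ops k :: ('d::finite list \<Rightarrow> 'd) set)"
  using finite_lists_length_eq[of "UNIV :: 'd set" k] unfolding ops_eq_PiE by (simp add: finite_PiE)

lemma ops_eqI: "f \<in> ops k \<Longrightarrow> h \<in> ops k \<Longrightarrow> (\<And>xs. length xs = k \<Longrightarrow> f xs = h xs) \<Longrightarrow> f = h"
  unfolding ops_eq_PiE by (rule PiE_ext) auto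

lemma superpos_in_ops: "superpos f k gs \<in> ops k"
  unfolding superpos_def ops_def by auto

lemma superpos_proj:
  assumes "i < length gs" "gs ! i \<in> ops k"
  shows "superpos (proj (length gs) i) k gs = gs ! i"
  using assms unfolding superpos_def proj_def ops_def by (auto intro!: ext)

lemma superpos_projs_right:
  assumes "f \<in> ops k"
  shows "superpos f k (map (proj k) [0..<k]) = f"
proof
  fix xs :: "'a list"
  show "superpos f k (map (proj k) [0..<k]) xs = f xs"
  proof (cases "length xs = k")
    case True
    then have "map (\<lambda>g. g xs) (map (proj k) [0..<k]) = xs"
      by (auto simp: proj_def intro: nth_equalityI)
    with True show ?thesis by (simp add: superpos_def)
  next
    case False
    with assms show ?thesis by (simp add: superpos_def ops_def)
  qed
qed

lemma superpos_superpos: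
  "length gs = m \<Longrightarrow> superpos (superpos f m ps) k gs = superpos f k (map (\<lambda>p. superpos p k gs) ps)"
  unfolding superpos_def by (auto intro!: ext simp: comp_def)

lemma superpos_shifted_projs:
  assumes "length G = n" "a + l \<le> n" "set G \<subseteq> ops k"
  shows "map (\<lambda>p. superpos p k G) (map (\<lambda>i. proj n (a + i)) [0..<l]) = take l (drop a G)"
  using assms superpos_proj[of _ G k] by (auto intro!: nth_equalityI simp: subset_iff)

lemma weighting_arity_ge1: "is_weighting W \<Longrightarrow> 1 \<le> fst W"
  unfolding is_weighting_def Let_def by auto

lemma weighting_nonneg: "is_weighting W \<Longrightarrow> f \<notin> projs (fst W) \<Longrightarrow> 0 \<le> snd W f"
  unfolding is_weighting_def Let_def using not_le by blast

lemma weighting_vanishes: "is_weighting W \<Longrightarrow> f \<notin> ops (fst W) \<Longrightarrow> snd W f = 0"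
  unfolding is_weighting_def Let_def by auto

lemma fst_wsuperpos [simp]: "fst (wsuperpos W l gs) = l"
  by (simp add: wsuperpos_def)

lemma wsuperpos_wsuperpos:
  fixes V :: "('d::finite) wgt"
  assumes "length gs = m"
  shows "snd (wsuperpos (wsuperpos V m ps) k gs) = snd (wsuperpos V k (map (\<lambda>p. superpos p k gs) ps))"
proof
  fix f'
  let ?h = "\<lambda>f. superpos f m ps"
  let ?S = "{f \<in> ops (fst V). superpos f k (map (\<lambda>p. superpos p k gs) ps) = f'}"
  let ?T = "{f \<in> ops m. superpos f k gs = f'}"
  have "finite ?S" "finite ?T"
    by (rule finite_subset[OF _ finite_ops], blast)+
  moreover have "?h ` ?S \<subseteq> ?T"
    using superpos_in_ops superpos_superpos[OF assms] by auto
  ultimately have "sum (snd V) ?S = (\<Sum>y\<in>?T. sum (snd V) {f \<in> ?S. ?h f = y})"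
    by (rule sum.group[symmetric])
  also have "\<dots> = (\<Sum>y\<in>?T. sum (snd V) {f \<in> ops (fst V). ?h f = y})"
    using superpos_superpos[OF assms] by (intro sum.cong refl arg_cong[where f = "sum _"]) auto
  finally show "snd (wsuperpos (wsuperpos V m ps) k gs) f' =
      snd (wsuperpos V k (map (\<lambda>p. superpos p k gs) ps)) f'"
    by (simp add: wsuperpos_def)
qed

lemma wsuperpos_add_scaled:
  "wsuperpos (n, \<lambda>f. a f + c * b f) k G =
     (k, \<lambda>f'. snd (wsuperpos (n, a) k G) f' + c * snd (wsuperpos (n, b) k G) f')"
  by (simp add: wsuperpos_def sum.distrib sum_distrib_left)

lemma wsuperpos_projs_right:
  fixes M :: "'d wgt"
  assumes "is_weighting M"
  shows "snd (wsuperpos M (fst M) (map (proj (fst M)) [0..<fst M])) = snd M"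
proof
  fix f' :: "'d list \<Rightarrow> 'd"
  have "{f \<in> ops (fst M). superpos f (fst M) (map (proj (fst M)) [0..<fst M]) = f'} =
      (if f' \<in> ops (fst M) then {f'} else {})"
    using superpos_projs_right by auto
  then show "snd (wsuperpos M (fst M) (map (proj (fst M)) [0..<fst M])) f' = snd M f'"
    using weighting_vanishes[OF assms] by (simp add: wsuperpos_def)
qed

lemma wsuperpos_shifted_projs:
  fixes W :: "('d::finite) wgt"
  assumes "length G = n" "a + fst W \<le> n" "set G \<subseteq> ops k"
  shows "snd (wsuperpos (wsuperpos W n (map (\<lambda>i. proj n (a + i)) [0..<fst W])) k G) =
         snd (wsuperpos W k (take (fst W) (drop a G)))"
  by (simp only: wsuperpos_wsuperpos[OF assms(1)] superpos_shifted_projs[OF assms])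

text \<open>The total weight is preserved because superposition sends every operation to
  exactly one operation.\<close>

lemma is_weighting_wsuperposI:
  fixes V :: "('d::finite) wgt"
  assumes V: "is_weighting V" and k: "1 \<le> k"
    and nonneg: "\<And>f. f \<notin> projs k \<Longrightarrow> 0 \<le> snd (wsuperpos V k gs) f"
  shows "is_weighting (wsuperpos V k gs)"
proof -
  let ?h = "\<lambda>f. superpos f k gs"
  have "?h ` ops (fst V) \<subseteq> ops k"
    using superpos_in_ops by auto
  then have "sum (snd (wsuperpos V k gs)) (ops k) = sum (snd V) (ops (fst V))"
    unfolding wsuperpos_def by (simp add: sum.group[OF finite_ops finite_ops])
  also have "\<dots> = 0"
    using V unfolding is_weighting_def Let_def by simp
  finally have "sum (snd (wsuperpos V k gs)) (ops k) = 0" .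
  moreover have "snd (wsuperpos V k gs) f = 0" if "f \<notin> ops k" for f
    using that superpos_in_ops by (auto simp: wsuperpos_def intro!: sum.neutral)
  ultimately show ?thesis
    using k nonneg unfolding is_weighting_def Let_def by (auto simp: not_le[symmetric])
qed

text \<open>Negative weight sits only on projections, and a projection is superposed to
  one of the arguments, so outside the arguments all contributions are nonnegative.\<close>

lemma wsuperpos_preimage_nonneg:
  assumes V: "is_weighting V" and len: "length gs = fst V" and gs: "set gs \<subseteq> ops k"
    and f': "f' \<notin> set gs" and f: "f \<in> ops (fst V)" "superpos f k gs = f'"
  shows "0 \<le> snd V f"
proof (rule ccontr)
  assume "\<not> 0 \<le> snd V f"
  then have "f \<in> projs (fst V)"
    using weighting_nonneg[OF V] by auto
  then obtain i where i: "i < length gs" "f = proj (length gs) i"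
    using len unfolding projs_def by auto
  then have "superpos f k gs = gs ! i"
    using superpos_proj gs by (metis nth_mem subsetD)
  with f f' i show False
    by (metis nth_mem)
qed

lemma wsuperpos_nonneg:
  fixes V :: "('d::finite) wgt"
  assumes "is_weighting V" "length gs = fst V" "set gs \<subseteq> ops k" "f' \<notin> set gs"
  shows "0 \<le> snd (wsuperpos V k gs) f'"
  unfolding wsuperpos_def snd_conv
  by (rule sum_nonneg) (use wsuperpos_preimage_nonneg[OF assms] in blast)

lemma wsuperpos_ge_weight:
  fixes V :: "('d::finite) wgt"
  assumes "is_weighting V" "length gs = fst V" "set gs \<subseteq> ops k" "f' \<notin> set gs"
    and g: "g \<in> ops (fst V)" "superpos g k gs = f'"
  shows "snd V g \<le> snd (wsuperpos V k gs) f'"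
proof -
  have "finite {f \<in> ops (fst V). superpos f k gs = f'}"
    by (rule finite_subset[OF _ finite_ops]) auto
  then show ?thesis
    unfolding wsuperpos_def snd_conv
    by (intro member_le_sum) (use g wsuperpos_preimage_nonneg[OF assms(1-4)] in auto)
qed

lemma is_weighting_wsuperpos_projs:
  fixes V :: "('d::finite) wgt"
  assumes "is_weighting V" "length gs = fst V" "set gs \<subseteq> projs k" "1 \<le> k"
  shows "is_weighting (wsuperpos V k gs)"
  using assms projs_subset_ops
  by (intro is_weighting_wsuperposI wsuperpos_nonneg) auto

lemma exists_scale_dominating:
  fixes a b :: "'a \<Rightarrow> real"
  assumes "finite S" and pos: "\<forall>s\<in>S. 0 < a s"
  shows "\<exists>c\<ge>0. \<forall>s\<in>S. b s < c * a s"
proof (intro exI conjI ballI)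
  let ?c = "\<Sum>s\<in>S. (\<bar>b s\<bar> + 1) / a s"
  show "0 \<le> ?c"
    using pos by (intro sum_nonneg) auto
  fix s assume s: "s \<in> S"
  have "(\<bar>b s\<bar> + 1) / a s \<le> ?c"
    using s pos assms(1) by (intro member_le_sum) auto
  with s pos show "b s < ?c * a s"
    by (simp add: pos_divide_le_eq)
qed

lemma weighted_clone_weighting: "weighted_clone \<Omega> \<Longrightarrow> W \<in> \<Omega> \<Longrightarrow> is_weighting W"
  unfolding weighted_clone_def by blast

lemma weighted_clone_scale:
  "weighted_clone \<Omega> \<Longrightarrow> W \<in> \<Omega> \<Longrightarrow> 0 \<le> c \<Longrightarrow> (fst W, \<lambda>f. c * snd W f) \<in> \<Omega>"
  unfolding weighted_clone_def by blast

lemma weighted_clone_add: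
  "weighted_clone \<Omega> \<Longrightarrow> W1 \<in> \<Omega> \<Longrightarrow> W2 \<in> \<Omega> \<Longrightarrow> fst W1 = fst W2 \<Longrightarrow>
    (fst W1, \<lambda>f. snd W1 f + snd W2 f) \<in> \<Omega>"
  unfolding weighted_clone_def by blast

lemma weighted_clone_wsuperpos:
  "weighted_clone \<Omega> \<Longrightarrow> W \<in> \<Omega> \<Longrightarrow> length gs = fst W \<Longrightarrow> \<forall>g\<in>set gs. (l, g) \<in> supp_set \<Omega> \<Longrightarrow>
    is_weighting (wsuperpos W l gs) \<Longrightarrow> wsuperpos W l gs \<in> \<Omega>"
  unfolding weighted_clone_def by blast

lemma proj_in_supp_set: "g \<in> projs n \<Longrightarrow> 1 \<le> n \<Longrightarrow> (n, g) \<in> supp_set \<Omega>"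
  unfolding supp_set_def all_projs_def by auto

lemma supp_set_arity:
  assumes "weighted_clone \<Omega>" and "(k, f) \<in> supp_set \<Omega>"
  shows "1 \<le> k" and "f \<in> ops k"
  using assms projs_subset_ops weighting_arity_ge1[OF weighted_clone_weighting[OF assms(1)]]
  unfolding supp_set_def all_projs_def supp_def by auto

lemma supp_set_positive_weight:
  assumes "(k, f) \<in> supp_set \<Omega>" and "f \<notin> projs k"
  shows "\<exists>W\<in>\<Omega>. fst W = k \<and> 0 < snd W f"
  using assms unfolding supp_set_def all_projs_def supp_def by auto

lemma weighted_clone_wsuperpos_projs:
  fixes \<Omega> :: "('d::finite) wgt set"
  assumes "weighted_clone \<Omega>" "W \<in> \<Omega>" "length gs = fst W" "set gs \<subseteq> projs n" "1 \<le> n"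
  shows "wsuperpos W n gs \<in> \<Omega>"
  using assms proj_in_supp_set
  by (intro weighted_clone_wsuperpos is_weighting_wsuperpos_projs weighted_clone_weighting) auto

lemma weighted_clone_arity:
  fixes \<Omega> :: "('d::finite) wgt set"
  assumes wc: "weighted_clone \<Omega>" and k: "1 \<le> k"
  shows "\<exists>M\<in>\<Omega>. fst M = k"
proof -
  obtain W where W: "W \<in> \<Omega>"
    using wc unfolding weighted_clone_def by blast
  have "set (replicate (fst W) (proj k 0)) \<subseteq> projs k"
    using k unfolding projs_def by auto
  then have "wsuperpos W k (replicate (fst W) (proj k 0)) \<in> \<Omega>"
    by (intro weighted_clone_wsuperpos_projs[OF wc W _ _ k]) simp_all
  then show ?thesis
    by force
qed

lemma weighted_clone_positive_on:
  fixes \<Omega> :: "('d::finite) wgt set"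
  assumes wc: "weighted_clone \<Omega>" and "finite S" and k: "1 \<le> k"
    and S: "\<forall>s\<in>S. (k, s) \<in> supp_set \<Omega> \<and> s \<notin> projs k"
  shows "\<exists>M\<in>\<Omega>. fst M = k \<and> (\<forall>s\<in>S. 0 < snd M s)"
  using \<open>finite S\<close> S
proof (induction S rule: finite_induct)
  case empty
  then show ?case
    using weighted_clone_arity[OF wc k] by auto
next
  case (insert s S)
  then obtain M where M: "M \<in> \<Omega>" "fst M = k" "\<forall>t\<in>S. 0 < snd M t"
    by auto
  obtain W where W: "W \<in> \<Omega>" "fst W = k" "0 < snd W s"
    using insert.prems supp_set_positive_weight by blast
  have "0 \<le> snd M t \<and> 0 \<le> snd W t" if "t \<in> insert s S" for t
    using that insert.prems M(2) W(2) weighting_nonneg[of M t] weighting_nonneg[of W t]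
      weighted_clone_weighting[OF wc M(1)] weighted_clone_weighting[OF wc W(1)] by auto
  with M W have "\<forall>t\<in>insert s S. 0 < snd M t + snd W t"
    by (auto simp: add_pos_nonneg add_nonneg_pos)
  with weighted_clone_add[OF wc M(1) W(1)] M W show ?case
    by (intro bexI) auto
qed

text \<open>Both summands are lifted by projections to the common arity \<open>fst W + k\<close> and then
  superposed with \<open>hs @ [e\<^sub>1, ..., e\<^sub>k]\<close>.\<close>

lemma weighted_clone_corrected_wsuperpos:
  fixes \<Omega> :: "('d::finite) wgt set"
  assumes wc: "weighted_clone \<Omega>" and W: "W \<in> \<Omega>" and M: "M \<in> \<Omega>" "fst M = k"
    and len: "length hs = fst W" and hs: "\<forall>h\<in>set hs. (k, h) \<in> supp_set \<Omega>" and c: "0 \<le> c"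
    and nonneg: "\<And>f. f \<notin> projs k \<Longrightarrow> 0 \<le> snd (wsuperpos W k hs) f + c * snd M f"
  shows "(k, \<lambda>f. snd (wsuperpos W k hs) f + c * snd M f) \<in> \<Omega>"
proof -
  have Mw: "is_weighting M"
    using wc M(1) by (rule weighted_clone_weighting)
  have k: "1 \<le> k"
    using weighting_arity_ge1[OF Mw] M(2) by simp
  define l where "l = fst W"
  define n where "n = l + k"
  define pk :: "('d list \<Rightarrow> 'd) list" where "pk = map (proj k) [0..<k]"
  define G where "G = hs @ pk"
  define W1 where "W1 = wsuperpos W n (map (\<lambda>i. proj n (0 + i)) [0..<l])"
  define M1 where "M1 = wsuperpos M n (map (\<lambda>i. proj n (l + i)) [0..<k])"
  have pk: "set pk \<subseteq> projs k"
    unfolding pk_def projs_def by auto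
  have W1: "W1 \<in> \<Omega>" and M1: "M1 \<in> \<Omega>"
    unfolding W1_def M1_def using k M(2)
    by (auto intro!: weighted_clone_wsuperpos_projs[OF wc] W M(1) proj_in_projs simp: l_def n_def)
  define B where "B = (n, \<lambda>f. snd W1 f + c * snd M1 f)"
  have B: "B \<in> \<Omega>"
    using weighted_clone_add[OF wc W1 weighted_clone_scale[OF wc M1 c]]
    by (simp add: B_def W1_def M1_def)
  have lenG: "length G = n" and G: "set G \<subseteq> ops k"
    using len pk projs_subset_ops supp_set_arity(2)[OF wc] hs
    by (auto simp: G_def pk_def n_def l_def)
  have "snd (wsuperpos W1 k G) = snd (wsuperpos W k hs)"
    using wsuperpos_shifted_projs[OF lenG _ G, of 0 W] len by (simp add: W1_def l_def n_def G_def)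
  moreover have "snd (wsuperpos M1 k G) = snd M"
    using wsuperpos_shifted_projs[OF lenG _ G, of l M] wsuperpos_projs_right[OF Mw] M(2) len
    by (simp add: M1_def l_def n_def G_def pk_def)
  ultimately have BG: "wsuperpos B k G = (k, \<lambda>f. snd (wsuperpos W k hs) f + c * snd M f)"
    unfolding B_def wsuperpos_add_scaled
    by (metis W1_def M1_def fst_wsuperpos prod.collapse)
  have "is_weighting (wsuperpos B k G)"
    using nonneg by (intro is_weighting_wsuperposI k weighted_clone_weighting[OF wc B]) (simp add: BG)
  moreover have "\<forall>g\<in>set G. (k, g) \<in> supp_set \<Omega>"
    using hs pk proj_in_supp_set[OF _ k] by (auto simp: G_def)
  ultimately show ?thesis
    using weighted_clone_wsuperpos[OF wc B, of G k] lenG unfolding BG by (simp add: B_def)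
qed

lemma supp_set_superpos_positive:
  fixes \<Omega> :: "('d::finite) wgt set"
  assumes wc: "weighted_clone \<Omega>" and W: "W \<in> \<Omega>" and g: "g \<in> ops (fst W)" "0 < snd W g"
    and len: "length hs = fst W" and hs: "\<forall>h\<in>set hs. (k, h) \<in> supp_set \<Omega>" and k: "1 \<le> k"
    and nonproj: "superpos g k hs \<notin> projs k"
  shows "(k, superpos g k hs) \<in> supp_set \<Omega>"
proof -
  let ?f = "superpos g k hs"
  define S where "S = set hs - projs k"
  define \<nu> where "\<nu> = snd (wsuperpos W k hs)"
  have hs_ops: "set hs \<subseteq> ops k"
    using hs supp_set_arity(2)[OF wc] by blast
  obtain M where M: "M \<in> \<Omega>" "fst M = k" "\<forall>s\<in>S. 0 < snd M s"
    using weighted_clone_positive_on[OF wc _ k, of S] hs by (auto simp: S_def)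
  obtain c where c: "0 \<le> c" "\<forall>s\<in>S. - \<nu> s < c * snd M s"
    using exists_scale_dominating[of S "snd M" "\<lambda>s. - \<nu> s"] M(3) by (auto simp: S_def)
  have cM: "0 \<le> c * snd M f" if "f \<notin> projs k" for f
    using weighting_nonneg[OF weighted_clone_weighting[OF wc M(1)]] that M(2) c(1) by simp
  have \<nu>: "0 \<le> \<nu> f" if "f \<notin> set hs" for f
    unfolding \<nu>_def using wsuperpos_nonneg[OF weighted_clone_weighting[OF wc W] len hs_ops that] .
  have "0 \<le> \<nu> f + c * snd M f" if "f \<notin> projs k" for f
  proof (cases "f \<in> S")
    case True
    with c(2) show ?thesis by force
  next
    case False
    with cM[OF that] \<nu>[of f] that show ?thesis by (simp add: S_def)
  qed
  then have "(k, \<lambda>f. \<nu> f + c * snd M f) \<in> \<Omega>"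
    unfolding \<nu>_def using weighted_clone_corrected_wsuperpos[OF wc W M(1,2) len hs c(1)] by simp
  moreover have "0 < \<nu> ?f + c * snd M ?f"
  proof (cases "?f \<in> S")
    case True
    with c(2) show ?thesis by force
  next
    case False
    then have "snd W g \<le> \<nu> ?f"
      unfolding \<nu>_def using wsuperpos_ge_weight[OF weighted_clone_weighting[OF wc W] len hs_ops _ g(1) refl] nonproj
      by (simp add: S_def)
    with g(2) cM[OF nonproj] show ?thesis by simp
  qed
  ultimately show ?thesis
    unfolding supp_set_def supp_def using superpos_in_ops by force
qed

lemma supp_set_superpos:
  fixes \<Omega> :: "('d::finite) wgt set"
  assumes wc: "weighted_clone \<Omega>" and W: "W \<in> \<Omega>" and g: "(l, g) \<in> supp W"
    and len: "length hs = l" and hs: "\<forall>h\<in>set hs. (k, h) \<in> supp_set \<Omega>"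
  shows "(k, superpos g k hs) \<in> supp_set \<Omega>"
proof -
  have l: "l = fst W"
    using g unfolding supp_def by auto
  then obtain h where "h \<in> set hs"
    using weighting_arity_ge1[OF weighted_clone_weighting[OF wc W]] len by (cases hs) auto
  then have k: "1 \<le> k"
    using hs supp_set_arity(1)[OF wc] by blast
  consider (proj_g) "g \<in> projs l" | (proj_f) "superpos g k hs \<in> projs k"
    | (nonproj) "g \<in> ops l" "0 < snd W g" "superpos g k hs \<notin> projs k"
    using g l unfolding supp_def by auto
  then show ?thesis
  proof cases
    case proj_g
    then obtain i where "i < l" "g = proj l i"
      unfolding projs_def by auto
    with len hs supp_set_arity(2)[OF wc] show ?thesis
      using superpos_proj[of i hs k] by (auto simp: subset_iff)
  next
    case proj_f
    then show ?thesis
      using proj_in_supp_set k by blast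
  next
    case nonproj
    with supp_set_superpos_positive[OF wc W _ _ _ hs k] len l show ?thesis
      by simp
  qed
qed

lemma apply_op_proj:
  assumes "i < length xs" "\<forall>x\<in>set xs. length x = m"
  shows "apply_op (proj (length xs) i) m xs = xs ! i"
  using assms by (auto intro!: nth_equalityI simp: apply_op_def proj_def)

lemma apply_op_columns:
  assumes "\<forall>r\<in>set args. length r = k"
  shows "apply_op g (length args) (map (\<lambda>h. map h args) hs) = map (superpos g k hs) args"
  using assms by (auto intro!: nth_equalityI simp: apply_op_def superpos_def comp_def)

lemma proj_is_polymorphism: "i < k \<Longrightarrow> is_polymorphism (k, proj k i) \<gamma>"
  unfolding is_polymorphism_def Feas_def
  using apply_op_proj[of i _ "fst \<gamma>"] nth_mem by fastforce

lemma supp_set_subset_Pol_Imp: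
  assumes wc: "weighted_clone \<Omega>"
  shows "supp_set \<Omega> \<subseteq> Pol (Imp \<Omega>)"
proof safe
  fix k f assume kf: "(k, f) \<in> supp_set \<Omega>"
  have "is_polymorphism (k, f) \<gamma>" if "\<gamma> \<in> Imp \<Omega>" for \<gamma>
    using kf that proj_is_polymorphism
    unfolding supp_set_def all_projs_def projs_def Imp_def improves_def Pol_def by blast
  with supp_set_arity[OF wc kf] show "(k, f) \<in> Pol (Imp \<Omega>)"
    unfolding Pol_def by auto
qed

definition supp_wrel :: "'d wgt set \<Rightarrow> nat \<Rightarrow> 'd list list \<Rightarrow> 'd wrel" where
  "supp_wrel \<Omega> k args =
     (length args, \<lambda>y. if y \<in> {map h args | h. (k, h) \<in> supp_set \<Omega>} then 0 else \<infinity>)"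

lemma fst_supp_wrel: "fst (supp_wrel \<Omega> k args) = length args"
  by (simp add: supp_wrel_def)

lemma Feas_supp_wrel: "Feas (supp_wrel \<Omega> k args) = {map h args | h. (k, h) \<in> supp_set \<Omega>}"
  unfolding Feas_def supp_wrel_def by auto

lemma map_of_set_subset_image:
  assumes "set xs \<subseteq> f ` A"
  obtains ys where "set ys \<subseteq> A" "xs = map f ys"
proof -
  from assms have "\<exists>ys. set ys \<subseteq> A \<and> xs = map f ys"
  proof (induction xs)
    case (Cons x xs)
    then obtain y ys where "y \<in> A" "x = f y" "set ys \<subseteq> A" "xs = map f ys"
      by auto
    then show ?case
      by (intro exI[of _ "y # ys"]) simp
  qed simp
  with that show thesis
    by blast
qed

lemma supp_wrel_in_Imp:
  fixes \<Omega> :: "('d::finite) wgt set"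
  assumes wc: "weighted_clone \<Omega>" and args: "\<forall>r\<in>set args. length r = k"
  shows "supp_wrel \<Omega> k args \<in> Imp \<Omega>"
  unfolding Imp_def
proof (intro CollectI conjI ballI)
  let ?\<gamma> = "supp_wrel \<Omega> k args"
  show "is_wrel ?\<gamma>"
    unfolding is_wrel_def supp_wrel_def by simp
  fix W assume W: "W \<in> \<Omega>"
  have "(l, g) \<in> Pol {?\<gamma>}" if lg: "(l, g) \<in> supp W" for l g
  proof -
    have "apply_op g (length args) xs \<in> Feas ?\<gamma>"
      if "length xs = l" "set xs \<subseteq> Feas ?\<gamma>" for xs
    proof -
      have "set xs \<subseteq> (\<lambda>h. map h args) ` {h. (k, h) \<in> supp_set \<Omega>}"
        using that(2) unfolding Feas_supp_wrel by auto
      then obtain hs where hs: "set hs \<subseteq> {h. (k, h) \<in> supp_set \<Omega>}"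
        and xs: "xs = map (\<lambda>h. map h args) hs"
        by (rule map_of_set_subset_image)
      have "(k, superpos g k hs) \<in> supp_set \<Omega>"
        using supp_set_superpos[OF wc W lg] hs xs that(1) by auto
      then show ?thesis
        unfolding xs Feas_supp_wrel apply_op_columns[OF args] by blast
    qed
    moreover have "1 \<le> l" "g \<in> ops l"
      using lg supp_set_arity[OF wc] W unfolding supp_set_def by blast+
    ultimately show ?thesis
      unfolding Pol_def is_polymorphism_def by (simp add: fst_supp_wrel)
  qed
  moreover have "real_of_ereal (snd ?\<gamma> y) = 0" for y
    by (simp add: supp_wrel_def)
  ultimately show "improves W ?\<gamma>"
    unfolding improves_def by auto
qed

lemma Pol_Imp_subset_supp_set:
  fixes \<Omega> :: "('d::finite) wgt set"
  assumes wc: "weighted_clone \<Omega>"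
  shows "Pol (Imp \<Omega>) \<subseteq> supp_set \<Omega>"
proof safe
  fix k f assume "(k, f) \<in> Pol (Imp \<Omega>)"
  then have k: "1 \<le> k" and f: "f \<in> ops k" and pol: "\<forall>\<gamma>\<in>Imp \<Omega>. is_polymorphism (k, f) \<gamma>"
    unfolding Pol_def by auto
  obtain args :: "'d list list" where args: "set args = {r. length r = k}"
    using finite_list[OF finite_lists_length_eq[of "UNIV :: 'd set" k]] by auto
  then have args_len: "\<forall>r\<in>set args. length r = k"
    by simp
  let ?\<gamma> = "supp_wrel \<Omega> k args"
  let ?ids = "map (\<lambda>h. map h args) (map (proj k) [0..<k])"
  have "set ?ids \<subseteq> Feas ?\<gamma>"
    unfolding Feas_supp_wrel using proj_in_supp_set[OF proj_in_projs k] by fastforce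
  moreover have "?\<gamma> \<in> Imp \<Omega>"
    using supp_wrel_in_Imp[OF wc args_len] .
  ultimately have "apply_op f (length args) ?ids \<in> Feas ?\<gamma>"
    using pol unfolding is_polymorphism_def by (auto dest!: bspec spec[of _ ?ids] simp: fst_supp_wrel)
  then obtain h where h: "(k, h) \<in> supp_set \<Omega>" "map f args = map h args"
    unfolding Feas_supp_wrel apply_op_columns[OF args_len] superpos_projs_right[OF f] by auto
  have "f = h"
    using f supp_set_arity(2)[OF wc h(1)] h(2) args by (intro ops_eqI) (auto simp: map_eq_conv)
  with h(1) show "(k, f) \<in> supp_set \<Omega>"
    by simp
qed

theorem lemma5:
  fixes \<Omega> :: "('d::finite) wgt set"
  assumes "CARD('d) \<ge> 2"
    and "weighted_clone \<Omega>"
  shows "supp_set \<Omega> = Pol (Imp \<Omega>)"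
  using supp_set_subset_Pol_Imp Pol_Imp_subset_supp_set assms(2) by blast

end
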